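(* Let $n\ge2$, $\kappa\ge1$ and $G\in\mathcal G_{[n;\kappa]}$ with payoff structure vectors $V_1^c,\dots,V_n^c\in\mathbb R^{\kappa^n}$. Consider the conditions (A) $V_i^c=-V_1^c\ltimes W_{[\kappa^{i-2},\kappa]}\ltimes W_{[\kappa,\kappa^{i-1}]}$ for $i=2,\dots,n$; (B) $V_1^c\ltimes\delta_\kappa^s\ltimes\left[I_{\kappa^{n-1}}+\left(W_{[\kappa^{i-2},\kappa]}\ltimes W_{[\kappa,\kappa^{i-3}]}\right)\otimes I_{\kappa^{n-i}}\right]=0$ for all $s=1,\dots,\kappa$ and $i=3,\dots,n$. (1) If $n=2$, then $G$ is skew-symmetric if and only if (A) holds (i.e. $V_2^c=-V_1^c W_{[\kappa,\kappa]}$). (2) If $n>2$, then $G$ is skew-symmetric if and only if (A) and (B) both hold.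
   Context: Semi-tensor product: for $A\in\mathbb R^{m\times n}$, $B\in\mathbb R^{p\times q}$ and $t=\mathrm{lcm}(n,p)$, $A\ltimes B=(A\otimes I_{t/n})(B\otimes I_{t/p})$; it is associative and coincides with the Kronecker product on column vectors. Swap matrix: $W_{[m,n]}\in\mathbb R^{mn\times mn}$ is the permutation matrix with $W_{[m,n]}(X\otimes Y)=Y\otimes X$ for all $X\in\mathbb R^m$, $Y\in\mathbb R^n$ (so $W_{[1,n]}=W_{[n,1]}=I_n$). $\delta_\kappa^s$ is the $s$-th column of $I_\kappa$. A finite game $G\in\mathcal G_{[n;\kappa]}$ has players $\{1,\dots,n\}$, each with strategy set $\{1,\dots,\kappa\}$, strategy $j$ identified with $\delta_\kappa^j$, and payoffs $c_i$; $V_i^c\in\mathbb R^{\kappa^n}$ is the unique row vector with $c_i(x_1,\dots,x_n)=V_i^c\ltimes x_1\ltimes\cdots\ltimes x_n$ for all $x_j\in\{\delta_\kappa^1,\dots,\delta_\kappa^\kappa\}$. $G$ is skew-symmetric if for every permutation $\sigma\in\mathbf S_n$, every $i$ and every profile, $c_i(x_1,\dots,x_n)=\mathrm{sgn}(\sigma)\,c_{\sigma(i)}(x_{\sigma^{-1}(1)},\dots,x_{\sigma^{-1}(n)})$. *)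

theory Defs
  imports "Jordan_Normal_Form.Matrix" "HOL-Library.FuncSet" "HOL-Combinatorics.Permutations"
begin

definition kron :: "real mat \<Rightarrow> real mat \<Rightarrow> real mat" where
  "kron A B = mat (dim_row A * dim_row B) (dim_col A * dim_col B)
     (\<lambda>(i,j). A $$ (i div dim_row B, j div dim_col B) * B $$ (i mod dim_row B, j mod dim_col B))"

definition stp :: "real mat \<Rightarrow> real mat \<Rightarrow> real mat" where
  "stp A B = (let t = lcm (dim_col A) (dim_row B) in
     kron A (1\<^sub>m (t div dim_col A)) * kron B (1\<^sub>m (t div dim_row B)))"

text \<open>Swap matrix W_[m,n]: the mn x mn permutation matrix with W (X (x) Y) = Y (x) X
  for X in R^m, Y in R^n. Entry (X (x) Y) at index a*n+b equals X_a Y_b, which is entry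
  b*m+a of Y (x) X.\<close>
definition swap_mat :: "nat \<Rightarrow> nat \<Rightarrow> real mat" where
  "swap_mat m n = mat (m*n) (m*n) (\<lambda>(r,c). if r = (c mod n) * m + c div n then 1 else 0)"

definition delta :: "nat \<Rightarrow> nat \<Rightarrow> real mat" where
  "delta k s = mat k 1 (\<lambda>(i,j). if i = s - 1 then 1 else 0)"

definition stp_profile :: "nat \<Rightarrow> nat \<Rightarrow> real mat \<Rightarrow> (nat \<Rightarrow> nat) \<Rightarrow> real mat" where
  "stp_profile n \<kappa> V x = foldl stp V (map (\<lambda>j. delta \<kappa> (x j)) [1..<n+1])"

definition profiles :: "nat \<Rightarrow> nat \<Rightarrow> (nat \<Rightarrow> nat) set" where
  "profiles n \<kappa> = {1..n} \<rightarrow>\<^sub>E {1..\<kappa>}"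

text \<open>Skew-symmetric game with payoffs c i (i in 1..n). The permuted profile
  (x_{sigma^-1(1)},...,x_{sigma^-1(n)}) is x o inv sigma.\<close>
definition skew_symmetric :: "nat \<Rightarrow> nat \<Rightarrow> (nat \<Rightarrow> (nat \<Rightarrow> nat) \<Rightarrow> real) \<Rightarrow> bool" where
  "skew_symmetric n \<kappa> c \<longleftrightarrow>
     (\<forall>\<sigma>. \<sigma> permutes {1..n} \<longrightarrow>
       (\<forall>i\<in>{1..n}. \<forall>x\<in>profiles n \<kappa>.
          c i x = of_int (sign \<sigma>) * c (\<sigma> i) (x \<circ> inv_into UNIV \<sigma>)))"

end

theory Submission
  imports Defs
begin

text \<open>Since V \<ltimes> x1 \<ltimes> ... \<ltimes> xn is the entry of V at the lexicographic index of the profile x,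
  and the swap matrices act on row vectors by permuting these indices, condition (A) says
  exactly that c_i(x) = -c_1(x \<circ> (1 i)), and condition (B) says that c_1 changes sign when the
  strategies of players 2 and i are exchanged. The transpositions (2 i) generate the permutations
  of {2..n}, so (B) makes c_1 alternating in the last n-1 players; together with (A) this yields
  skew-symmetry for an arbitrary \<sigma>, because (1 i) \<circ> inv \<sigma> \<circ> (1 \<sigma>(i)) fixes player 1.\<close>

definition sel_mat :: "nat \<Rightarrow> nat \<Rightarrow> (nat \<Rightarrow> nat) \<Rightarrow> real mat" where
  "sel_mat N M f = mat N M (\<lambda>(r, c). if r = f c then 1 else 0)"

definition swap_index :: "nat \<Rightarrow> nat \<Rightarrow> nat \<Rightarrow> nat" where
  "swap_index m n = (\<lambda>c. (c mod n) * m + c div n)"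

definition kron_index :: "nat \<Rightarrow> (nat \<Rightarrow> nat) \<Rightarrow> nat \<Rightarrow> nat" where
  "kron_index t f = (\<lambda>c. f (c div t) * t + c mod t)"

lemma sel_mat_carrier [simp]: "sel_mat N M f \<in> carrier_mat N M"
  and dim_sel_mat [simp]: "dim_row (sel_mat N M f) = N" "dim_col (sel_mat N M f) = M"
  by (simp_all add: sel_mat_def)

lemma swap_mat_eq_sel_mat: "swap_mat m n = sel_mat (m * n) (m * n) (swap_index m n)"
  by (simp add: swap_mat_def sel_mat_def swap_index_def)

lemma delta_eq_sel_mat: "delta k s = sel_mat k 1 (\<lambda>_. s - 1)"
  by (simp add: delta_def sel_mat_def)

lemma index_mult_sel_mat:
  assumes V: "V \<in> carrier_mat 1 N" and c: "c < M" and fc: "f c < N"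
  shows "(V * sel_mat N M f) $$ (0, c) = V $$ (0, f c)"
proof -
  have "(V * sel_mat N M f) $$ (0, c) = (\<Sum>r<N. V $$ (0, r) * (if r = f c then 1 else 0))"
    using V c by (simp add: index_mult_mat scalar_prod_def atLeast0LessThan sel_mat_def)
  also have "\<dots> = (\<Sum>r<N. if r = f c then V $$ (0, r) else 0)"
    by (rule sum.cong) auto
  also have "\<dots> = V $$ (0, f c)"
    using fc by (simp add: sum.delta)
  finally show ?thesis .
qed

lemma sel_mat_mult:
  assumes g: "\<And>c. c < M \<Longrightarrow> g c < N"
  shows "sel_mat L N f * sel_mat N M g = sel_mat L M (f \<circ> g)"
proof (rule eq_matI)
  fix r c assume r: "r < dim_row (sel_mat L M (f \<circ> g))" and c: "c < dim_col (sel_mat L M (f \<circ> g))"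
  have "(sel_mat L N f * sel_mat N M g) $$ (r, c)
      = (\<Sum>j<N. (if r = f j then 1 else 0) * (if j = g c then 1 else 0))"
    using r c by (simp add: index_mult_mat scalar_prod_def atLeast0LessThan sel_mat_def)
  also have "\<dots> = (\<Sum>j<N. if j = g c then (if r = f (g c) then 1 else 0) else 0)"
    by (rule sum.cong) auto
  also have "\<dots> = sel_mat L M (f \<circ> g) $$ (r, c)"
    using g r c by (simp add: sum.delta sel_mat_def)
  finally show "(sel_mat L N f * sel_mat N M g) $$ (r, c) = sel_mat L M (f \<circ> g) $$ (r, c)" .
qed simp_all

lemma kron_sel_mat_one:
  assumes t: "0 < t"
  shows "kron (sel_mat N M f) (1\<^sub>m t) = sel_mat (N * t) (M * t) (kron_index t f)"
proof (rule eq_matI)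
  fix r c
  assume "r < dim_row (sel_mat (N * t) (M * t) (kron_index t f))"
    and "c < dim_col (sel_mat (N * t) (M * t) (kron_index t f))"
  then have r: "r < N * t" and c: "c < M * t" by simp_all
  have "r div t < N" "c div t < M"
    using r c by (simp_all add: less_mult_imp_div_less)
  moreover have "r = f (c div t) * t + c mod t \<longleftrightarrow> r div t = f (c div t) \<and> r mod t = c mod t"
  proof
    assume "r = f (c div t) * t + c mod t"
    then show "r div t = f (c div t) \<and> r mod t = c mod t" using t by simp
  next
    assume "r div t = f (c div t) \<and> r mod t = c mod t"
    then show "r = f (c div t) * t + c mod t" by (metis div_mult_mod_eq)
  qed
  ultimately show "kron (sel_mat N M f) (1\<^sub>m t) $$ (r, c)
      = sel_mat (N * t) (M * t) (kron_index t f) $$ (r, c)"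
    using r c t by (simp add: kron_def sel_mat_def kron_index_def)
qed (simp_all add: kron_def)

lemma kron_one_1 [simp]: "kron A (1\<^sub>m (Suc 0)) = A"
  by (auto simp: kron_def intro!: eq_matI)

lemma stp_eq_mult_kron:
  assumes "dim_col A = dim_row B * t" "0 < dim_row B" "0 < t"
  shows "stp A B = A * kron B (1\<^sub>m t)"
  using assms by (simp add: stp_def Let_def)

lemma stp_eq_mult:
  assumes "dim_col A = dim_row B" "0 < dim_row B"
  shows "stp A B = A * B"
  using stp_eq_mult_kron[of A B "Suc 0"] assms by simp

lemma swap_index_less:
  assumes "c < m * n"
  shows "swap_index m n c < m * n"
proof -
  have n: "0 < n" using assms by (cases n) auto
  have "c div n < m" using assms by (simp add: less_mult_imp_div_less mult.commute)
  moreover have "c mod n \<le> n - 1"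
    using mod_less_divisor[OF n, of c] by linarith
  then have "(c mod n) * m \<le> (n - 1) * m" by simp
  ultimately have "(c mod n) * m + c div n < (n - 1) * m + m" by linarith
  also have "\<dots> = m * n" using n by (cases n) auto
  finally show ?thesis unfolding swap_index_def by simp
qed

lemma kron_index_less:
  assumes f: "\<And>d. d < N \<Longrightarrow> f d < N" and c: "c < N * t"
  shows "kron_index t f c < N * t"
proof -
  have t: "0 < t" and "0 < N" using c by (cases t; cases N; auto)+
  have "c div t < N" using c by (simp add: less_mult_imp_div_less)
  then have "f (c div t) * t \<le> (N - 1) * t" using f by (intro mult_right_mono) fastforce+
  moreover have "c mod t < t" using t by simp
  ultimately have "f (c div t) * t + c mod t < (N - 1) * t + t" by linarith
  also have "\<dots> = N * t" using \<open>0 < N\<close> by (cases N) auto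
  finally show ?thesis unfolding kron_index_def by simp
qed

text \<open>Strategies are numbered from 1, and the first player is the most significant digit,
  so that \<delta> (x 1) \<ltimes> ... \<ltimes> \<delta> (x n) is the column of the identity matrix with this index.\<close>

fun lex_index :: "nat \<Rightarrow> nat list \<Rightarrow> nat" where
  "lex_index k [] = 0"
| "lex_index k (a # xs) = (a - 1) * k ^ length xs + lex_index k xs"

lemma lex_index_less:
  assumes "set xs \<subseteq> {1..k}"
  shows "lex_index k xs < k ^ length xs"
  using assms
proof (induction xs)
  case Nil
  then show ?case by simp
next
  case (Cons a xs)
  then have ih: "lex_index k xs < k ^ length xs" and a: "1 \<le> a" "a \<le> k" by auto
  have "(a - 1) * k ^ length xs \<le> (k - 1) * k ^ length xs"
    using a by (intro mult_right_mono) auto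
  with ih have "lex_index k (a # xs) < (k - 1) * k ^ length xs + k ^ length xs"
    by (simp only: lex_index.simps)
  also have "\<dots> = k ^ length (a # xs)"
    using a by (cases k) auto
  finally show ?case .
qed

lemma lex_index_append: "lex_index k (xs @ ys) = lex_index k xs * k ^ length ys + lex_index k ys"
  by (induction xs) (auto simp: algebra_simps power_add)

lemma lex_index_append_div_mod:
  assumes "set ys \<subseteq> {1..k}"
  shows "lex_index k (xs @ ys) div k ^ length ys = lex_index k xs"
    and "lex_index k (xs @ ys) mod k ^ length ys = lex_index k ys"
proof -
  have "lex_index k ys < k ^ length ys" using lex_index_less[OF assms] .
  moreover from this have "0 < k ^ length ys" by linarith
  ultimately show "lex_index k (xs @ ys) div k ^ length ys = lex_index k xs"
    and "lex_index k (xs @ ys) mod k ^ length ys = lex_index k ys"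
    by (simp_all add: lex_index_append)
qed

lemma lex_index_surj:
  assumes "j < k ^ L"
  obtains xs where "length xs = L" "set xs \<subseteq> {1..k}" "lex_index k xs = j"
  using assms
proof (induction L arbitrary: j thesis)
  case 0
  then show ?case by simp
next
  case (Suc L)
  have "0 < k" using Suc.prems by (cases k) auto
  then obtain xs where xs: "length xs = L" "set xs \<subseteq> {1..k}" "lex_index k xs = j mod k ^ L"
    using Suc.IH[of "j mod k ^ L"] by auto
  have "j div k ^ L < k"
    using Suc.prems by (simp add: less_mult_imp_div_less mult.commute)
  then show ?case
    using xs by (intro Suc.prems(1)[of "(j div k ^ L + 1) # xs"]) (auto simp: div_mult_mod_eq)
qed

lemma swap_index_lex_index:
  assumes "set ys \<subseteq> {1..k}"
  shows "swap_index (k ^ length xs) (k ^ length ys) (lex_index k (xs @ ys)) = lex_index k (ys @ xs)"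
  using lex_index_append_div_mod[OF assms, of xs] by (simp add: swap_index_def lex_index_append)

lemma kron_index_lex_index:
  assumes "set zs \<subseteq> {1..k}"
  shows "kron_index (k ^ length zs) f (lex_index k (xs @ zs))
    = f (lex_index k xs) * k ^ length zs + lex_index k zs"
  using lex_index_append_div_mod[OF assms, of xs] by (simp add: kron_index_def)

lemma stp_delta:
  assumes V: "V \<in> carrier_mat 1 (k * K)" and s: "s \<in> {1..k}" and K: "0 < K"
  shows "stp V (delta k s) \<in> carrier_mat 1 K"
    and "c < K \<Longrightarrow> stp V (delta k s) $$ (0, c) = V $$ (0, (s - 1) * K + c)"
proof -
  have "stp V (delta k s) = V * kron (delta k s) (1\<^sub>m K)"
    using V s K by (intro stp_eq_mult_kron) (simp_all add: delta_def)
  also have "\<dots> = V * sel_mat (k * K) K (\<lambda>c. (s - 1) * K + c mod K)"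
    unfolding delta_eq_sel_mat kron_sel_mat_one[OF K] by (simp add: kron_index_def)
  finally have eq: "stp V (delta k s) = V * sel_mat (k * K) K (\<lambda>c. (s - 1) * K + c mod K)" .
  then show "stp V (delta k s) \<in> carrier_mat 1 K"
    using V by simp
  assume c: "c < K"
  have "(s - 1) * K + c < (s - 1) * K + K" using c by simp
  also have "\<dots> = s * K" using s by (cases s) auto
  also have "\<dots> \<le> k * K" using s by simp
  finally show "stp V (delta k s) $$ (0, c) = V $$ (0, (s - 1) * K + c)"
    unfolding eq using index_mult_sel_mat[OF V c] c by simp
qed

lemma foldl_stp_delta:
  assumes "set xs \<subseteq> {1..k}" "0 < m" "V \<in> carrier_mat 1 (k ^ length xs * m)"
  shows "foldl stp V (map (delta k) xs) \<in> carrier_mat 1 m \<and>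
    (\<forall>j<m. foldl stp V (map (delta k) xs) $$ (0, j) = V $$ (0, lex_index k xs * m + j))"
  using assms
proof (induction xs arbitrary: V)
  case Nil
  then show ?case by simp
next
  case (Cons a xs)
  let ?K = "k ^ length xs * m"
  have a: "a \<in> {1..k}" and xs: "set xs \<subseteq> {1..k}" using Cons.prems by auto
  have K: "0 < ?K" using a Cons.prems by simp
  have V: "V \<in> carrier_mat 1 (k * ?K)" using Cons.prems by (simp add: mult.assoc)
  note R = stp_delta[OF V a K]
  have IH: "foldl stp (stp V (delta k a)) (map (delta k) xs) \<in> carrier_mat 1 m \<and>
    (\<forall>j<m. foldl stp (stp V (delta k a)) (map (delta k) xs) $$ (0, j)
       = stp V (delta k a) $$ (0, lex_index k xs * m + j))"
    using Cons.IH[OF xs Cons.prems(2) R(1)] .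
  have "lex_index k xs * m + j < ?K" if "j < m" for j
  proof -
    have "lex_index k xs * m + j < (lex_index k xs + 1) * m" using that by simp
    also have "\<dots> \<le> ?K"
      using lex_index_less[OF xs] by (intro mult_right_mono) auto
    finally show ?thesis .
  qed
  then show ?case
    using IH R(2) by (simp add: algebra_simps)
qed

definition profile_index :: "nat \<Rightarrow> nat \<Rightarrow> (nat \<Rightarrow> nat) \<Rightarrow> nat" where
  "profile_index n k x = lex_index k (map x [1..<n+1])"

lemma set_map_profile: "x \<in> profiles n k \<Longrightarrow> set (map x [1..<n+1]) \<subseteq> {1..k}"
  by (auto simp: profiles_def PiE_iff)

lemma profile_index_less: "x \<in> profiles n k \<Longrightarrow> profile_index n k x < k ^ n"
  using lex_index_less[OF set_map_profile] by (simp add: profile_index_def del: upt_Suc)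

lemma stp_profile_eq_index:
  assumes "0 < k" "V \<in> carrier_mat 1 (k ^ n)" "x \<in> profiles n k"
  shows "stp_profile n k V x $$ (0, 0) = V $$ (0, profile_index n k x)"
proof -
  have "stp_profile n k V x = foldl stp V (map (delta k) (map x [1..<n+1]))"
    unfolding stp_profile_def by (simp add: o_def)
  then show ?thesis
    using foldl_stp_delta[OF set_map_profile[OF assms(3)], of 1 V] assms
    by (simp add: profile_index_def del: upt_Suc)
qed

lemma profile_of_list:
  assumes "length xs = n" "set xs \<subseteq> {1..k}"
  obtains x where "x \<in> profiles n k" "map x [1..<n+1] = xs"
proof
  define x where "x j = (if j \<in> {1..n} then xs ! (j - 1) else undefined)" for j
  have "xs ! (j - 1) \<in> {1..k}" if "j \<in> {1..n}" for j
  proof -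
    have "j - 1 < length xs" using assms(1) that by auto
    then show ?thesis using assms(2) nth_mem by blast
  qed
  then show "x \<in> profiles n k"
    unfolding profiles_def x_def by (simp add: PiE_iff extensional_def)
  show "map x [1..<n+1] = xs"
    using assms by (intro nth_equalityI) (auto simp del: upt_Suc simp: x_def nth_upt)
qed

lemma profile_index_surj:
  assumes "j < k ^ n"
  obtains x where "x \<in> profiles n k" "profile_index n k x = j"
proof -
  obtain xs where "length xs = n" "set xs \<subseteq> {1..k}" "lex_index k xs = j"
    using lex_index_surj[OF assms] .
  with profile_of_list[of xs n k] that show ?thesis
    unfolding profile_index_def by metis
qed

lemma profiles_comp_permutes:
  assumes x: "x \<in> profiles n k" and p: "p permutes {1..n}"
  shows "x \<circ> p \<in> profiles n k"
  using x permutes_in_image[OF p] permutes_not_in[OF p]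
  by (auto simp: profiles_def PiE_iff extensional_def)

lemma row_eq_iff_profile_index:
  assumes "V \<in> carrier_mat 1 (k ^ n)" "W \<in> carrier_mat 1 (k ^ n)"
  shows "V = W \<longleftrightarrow> (\<forall>x\<in>profiles n k. V $$ (0, profile_index n k x) = W $$ (0, profile_index n k x))"
proof
  assume eq: "\<forall>x\<in>profiles n k. V $$ (0, profile_index n k x) = W $$ (0, profile_index n k x)"
  show "V = W"
  proof (rule eq_matI)
    fix r j assume "r < dim_row W" "j < dim_col W"
    then have "r = 0" "j < k ^ n" using assms by auto
    moreover obtain x where "x \<in> profiles n k" "profile_index n k x = j"
      using profile_index_surj[OF \<open>j < k ^ n\<close>] .
    ultimately show "V $$ (r, j) = W $$ (r, j)" using eq by blast
  qed (use assms in auto)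
qed simp

lemma kron_swap_index_lex_index:
  assumes lens: "length ys = p" "length zs = q" and xs: "set (a # ys @ [b] @ zs) \<subseteq> {1..k}"
  shows "kron_index (k ^ q) (swap_index k (k ^ (p + 1))) (lex_index k (a # ys @ [b] @ zs))
      = lex_index k ((ys @ [b]) @ (a # zs))"
    and "kron_index (k ^ (q + 1)) (swap_index (k ^ p) k) (lex_index k ((ys @ [b]) @ (a # zs)))
      = lex_index k (b # ys @ [a] @ zs)"
proof -
  have ys: "set ys \<subseteq> {1..k}" and zs: "set zs \<subseteq> {1..k}" and a: "a \<in> {1..k}" and b: "b \<in> {1..k}"
    using xs by auto
  have "kron_index (k ^ q) (swap_index k (k ^ (p + 1))) (lex_index k (a # ys @ [b] @ zs))
      = swap_index k (k ^ (p + 1)) (lex_index k ([a] @ ys @ [b])) * k ^ q + lex_index k zs"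
    using kron_index_lex_index[OF zs, of _ "a # ys @ [b]"] lens by simp
  also have "\<dots> = lex_index k (ys @ [b] @ [a]) * k ^ q + lex_index k zs"
    using swap_index_lex_index[of "ys @ [b]" k "[a]"] ys b lens by simp
  also have "\<dots> = lex_index k ((ys @ [b]) @ (a # zs))"
    using lens by (simp add: lex_index_append algebra_simps)
  finally show "kron_index (k ^ q) (swap_index k (k ^ (p + 1))) (lex_index k (a # ys @ [b] @ zs))
      = lex_index k ((ys @ [b]) @ (a # zs))" .
  have "kron_index (k ^ (q + 1)) (swap_index (k ^ p) k) (lex_index k ((ys @ [b]) @ (a # zs)))
      = swap_index (k ^ p) k (lex_index k (ys @ [b])) * k ^ (q + 1) + lex_index k (a # zs)"
    using kron_index_lex_index[of "a # zs" k _ "ys @ [b]"] a zs lens by simp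
  also have "\<dots> = lex_index k ([b] @ ys) * k ^ (q + 1) + lex_index k (a # zs)"
    using swap_index_lex_index[of "[b]" k ys] b lens by simp
  also have "\<dots> = lex_index k (b # ys @ [a] @ zs)"
    using lens by (simp add: lex_index_append algebra_simps power_add)
  finally show "kron_index (k ^ (q + 1)) (swap_index (k ^ p) k) (lex_index k ((ys @ [b]) @ (a # zs)))
      = lex_index k (b # ys @ [a] @ zs)" .
qed

lemma swap_kron_swap_index_lex_index:
  assumes len: "length ys = p" and xs: "set (b # ys @ [d]) \<subseteq> {1..k}"
  shows "(swap_index (k ^ (p + 1)) k \<circ> kron_index k (swap_index k (k ^ p))) (lex_index k (b # ys @ [d]))
      = lex_index k (d # ys @ [b])"
proof -
  have ys: "set ys \<subseteq> {1..k}" and b: "b \<in> {1..k}" and d: "d \<in> {1..k}"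
    using xs by auto
  have "kron_index k (swap_index k (k ^ p)) (lex_index k (b # ys @ [d]))
      = swap_index k (k ^ p) (lex_index k ([b] @ ys)) * k + lex_index k [d]"
    using kron_index_lex_index[of "[d]" k _ "b # ys"] d by simp
  also have "\<dots> = lex_index k ((ys @ [b]) @ [d])"
    using swap_index_lex_index[of ys k "[b]"] ys len by (simp add: lex_index_append algebra_simps)
  finally show ?thesis
    using swap_index_lex_index[of "[d]" k "ys @ [b]"] d len by simp
qed

lemma stp_swap_swap:
  fixes V :: "real mat"
  assumes k: "0 < k" and V: "V \<in> carrier_mat 1 (k ^ (p + q + 2))"
  defines "M \<equiv> stp (stp V (swap_mat (k ^ p) k)) (swap_mat k (k ^ (p + 1)))"
  shows "M \<in> carrier_mat 1 (k ^ (p + q + 2))"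
    and "\<lbrakk>length ys = p; length zs = q; set (a # ys @ [b] @ zs) \<subseteq> {1..k}\<rbrakk> \<Longrightarrow>
      M $$ (0, lex_index k (a # ys @ [b] @ zs)) = V $$ (0, lex_index k (b # ys @ [a] @ zs))"
proof -
  let ?N = "k ^ (p + q + 2)"
  define P1 where "P1 = kron_index (k ^ (q + 1)) (swap_index (k ^ p) k)"
  define P2 where "P2 = kron_index (k ^ q) (swap_index k (k ^ (p + 1)))"
  have N1: "k ^ p * k * k ^ (q + 1) = ?N" and N2: "k * k ^ (p + 1) * k ^ q = ?N"
    by (simp_all add: power_add algebra_simps)
  have "stp V (swap_mat (k ^ p) k) = V * kron (swap_mat (k ^ p) k) (1\<^sub>m (k ^ (q + 1)))"
    by (rule stp_eq_mult_kron) (use V k in \<open>simp_all add: swap_mat_def power_add algebra_simps\<close>)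
  also have "\<dots> = V * sel_mat ?N ?N P1"
    unfolding swap_mat_eq_sel_mat kron_sel_mat_one[OF zero_less_power[OF k]] N1 P1_def ..
  finally have S1: "stp V (swap_mat (k ^ p) k) = V * sel_mat ?N ?N P1" .
  have C1: "V * sel_mat ?N ?N P1 \<in> carrier_mat 1 ?N" using V by simp
  have "M = (V * sel_mat ?N ?N P1) * kron (swap_mat k (k ^ (p + 1))) (1\<^sub>m (k ^ q))"
    unfolding M_def S1
    by (rule stp_eq_mult_kron) (use C1 k in \<open>simp_all add: swap_mat_def power_add algebra_simps\<close>)
  also have "\<dots> = (V * sel_mat ?N ?N P1) * sel_mat ?N ?N P2"
    unfolding swap_mat_eq_sel_mat kron_sel_mat_one[OF zero_less_power[OF k]] N2 P2_def ..
  finally have M: "M = (V * sel_mat ?N ?N P1) * sel_mat ?N ?N P2" .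
  then show "M \<in> carrier_mat 1 ?N" using C1 by simp
  assume lens: "length ys = p" "length zs = q" and xs: "set (a # ys @ [b] @ zs) \<subseteq> {1..k}"
  then have ys: "set ys \<subseteq> {1..k}" and zs: "set zs \<subseteq> {1..k}" and a: "a \<in> {1..k}" and b: "b \<in> {1..k}"
    by auto
  let ?x = "lex_index k (a # ys @ [b] @ zs)"
  note x2 = kron_swap_index_lex_index(1)[OF lens xs, folded P2_def]
  note x1 = kron_swap_index_lex_index(2)[OF lens xs, folded P1_def, folded x2]
  have lt0: "?x < ?N"
    using lex_index_less[OF xs] lens by simp
  have lt2: "P2 ?x < ?N"
    unfolding x2 using lex_index_less[of "(ys @ [b]) @ (a # zs)" k] ys zs a b lens by simp
  have lt1: "P1 (P2 ?x) < ?N"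
    unfolding x1 using lex_index_less[of "b # ys @ [a] @ zs" k] ys zs a b lens by simp
  have "M $$ (0, ?x) = (V * sel_mat ?N ?N P1) $$ (0, P2 ?x)"
    unfolding M by (rule index_mult_sel_mat[where f = P2, OF C1 lt0 lt2])
  also have "\<dots> = V $$ (0, P1 (P2 ?x))"
    by (rule index_mult_sel_mat[where f = P1, OF V lt2 lt1])
  finally show "M $$ (0, ?x) = V $$ (0, lex_index k (b # ys @ [a] @ zs))"
    unfolding x1 .
qed

lemma stp_swap_swap_eq_sel_mat:
  assumes k: "0 < k"
  shows "stp (swap_mat (k ^ (p + 1)) k) (swap_mat k (k ^ p))
    = sel_mat (k ^ (p + 2)) (k ^ (p + 2)) (swap_index (k ^ (p + 1)) k \<circ> kron_index k (swap_index k (k ^ p)))"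
proof -
  let ?L = "k ^ (p + 2)"
  have L1: "k ^ (p + 1) * k = ?L" and L2: "k * k ^ p * k = ?L"
    by (simp_all add: algebra_simps)
  have "kron_index k (swap_index k (k ^ p)) c < ?L" if "c < ?L" for c
    using kron_index_less[of "k * k ^ p" "swap_index k (k ^ p)" c k] swap_index_less that L2 by auto
  moreover have "stp (swap_mat (k ^ (p + 1)) k) (swap_mat k (k ^ p)) =
      swap_mat (k ^ (p + 1)) k * kron (swap_mat k (k ^ p)) (1\<^sub>m k)"
    by (rule stp_eq_mult_kron) (use k in \<open>simp_all add: swap_mat_def algebra_simps\<close>)
  ultimately show ?thesis
    unfolding swap_mat_eq_sel_mat kron_sel_mat_one[OF k] L1 L2 by (simp add: sel_mat_mult)
qed

lemma stp_delta_one_plus_swap: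
  fixes V :: "real mat"
  assumes k: "0 < k" and V: "V \<in> carrier_mat 1 (k ^ (p + q + 3))" and s: "s \<in> {1..k}"
  defines "M \<equiv> stp (stp V (delta k s))
    (1\<^sub>m (k ^ (p + q + 2)) + kron (stp (swap_mat (k ^ (p + 1)) k) (swap_mat k (k ^ p))) (1\<^sub>m (k ^ q)))"
  shows "M \<in> carrier_mat 1 (k ^ (p + q + 2))"
    and "\<lbrakk>length ys = p; length zs = q; set (b # ys @ [d] @ zs) \<subseteq> {1..k}\<rbrakk> \<Longrightarrow>
      M $$ (0, lex_index k (b # ys @ [d] @ zs)) =
        V $$ (0, lex_index k (s # b # ys @ [d] @ zs)) + V $$ (0, lex_index k (s # d # ys @ [b] @ zs))"
proof -
  let ?K = "k ^ (p + q + 2)"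
  define P where "P = kron_index (k ^ q) (swap_index (k ^ (p + 1)) k \<circ> kron_index k (swap_index k (k ^ p)))"
  have K: "0 < ?K" using k by simp
  have "p + q + 3 = Suc (p + q + 2)" by simp
  then have "V \<in> carrier_mat 1 (k * ?K)" using V by (simp only: power_Suc)
  note R = stp_delta[OF this s K]
  define R where "R = stp V (delta k s)"
  have RK: "R \<in> carrier_mat 1 ?K" using R(1) by (simp add: R_def)
  have LK: "k ^ (p + 2) * k ^ q = ?K" by (simp add: power_add algebra_simps)
  have "M = stp R (1\<^sub>m ?K + sel_mat ?K ?K P)"
    unfolding M_def R_def stp_swap_swap_eq_sel_mat[OF k] kron_sel_mat_one[OF zero_less_power[OF k]] LK P_def ..
  also have "\<dots> = R * (1\<^sub>m ?K + sel_mat ?K ?K P)"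
    by (rule stp_eq_mult) (use RK K in simp_all)
  also have "\<dots> = R * 1\<^sub>m ?K + R * sel_mat ?K ?K P"
    by (rule mult_add_distrib_mat[OF RK]) auto
  finally have M: "M = R + R * sel_mat ?K ?K P"
    using RK by simp
  then show "M \<in> carrier_mat 1 ?K" using RK by simp
  assume lens: "length ys = p" "length zs = q" and xs: "set (b # ys @ [d] @ zs) \<subseteq> {1..k}"
  then have ys: "set ys \<subseteq> {1..k}" and zs: "set zs \<subseteq> {1..k}" and b: "b \<in> {1..k}" and d: "d \<in> {1..k}"
    by auto
  let ?x = "lex_index k (b # ys @ [d] @ zs)"
  have "set (b # ys @ [d]) \<subseteq> {1..k}" using xs by auto
  from swap_kron_swap_index_lex_index[OF lens(1) this]
  have "P ?x = lex_index k (d # ys @ [b]) * k ^ q + lex_index k zs"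
    using kron_index_lex_index[OF zs, of _ "b # ys @ [d]"] lens unfolding P_def by simp
  also have "\<dots> = lex_index k (d # ys @ [b] @ zs)"
    using lens by (simp add: lex_index_append algebra_simps power_add)
  finally have x: "P ?x = lex_index k (d # ys @ [b] @ zs)" .
  have lt: "?x < ?K"
    using lex_index_less[OF xs] lens by simp
  have Plt: "P ?x < ?K"
    unfolding x using lex_index_less[of "d # ys @ [b] @ zs" k] ys zs b d lens by simp
  have "M $$ (0, ?x) = R $$ (0, ?x) + R $$ (0, P ?x)"
    unfolding M using RK lt index_mult_sel_mat[where f = P, OF RK lt Plt] by simp
  also have "\<dots> = V $$ (0, lex_index k (s # b # ys @ [d] @ zs)) + V $$ (0, lex_index k (s # d # ys @ [b] @ zs))"
    using R(2)[OF lt] R(2)[OF Plt] lens unfolding R_def x by simp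
  finally show "M $$ (0, ?x) =
      V $$ (0, lex_index k (s # b # ys @ [d] @ zs)) + V $$ (0, lex_index k (s # d # ys @ [b] @ zs))" .
qed

lemma upt_split3:
  assumes "a < b" "b \<le> m"
  shows "[a..<m+1] = a # [a+1..<b] @ [b] @ [b+1..<m+1]"
proof -
  have "[a..<m+1] = [a..<b] @ [b..<m+1]"
    using assms upt_add_eq_append[of a b "m + 1 - b"] by simp
  also have "[a..<b] = a # [a+1..<b]" using assms upt_conv_Cons by simp
  also have "[b..<m+1] = b # [b+1..<m+1]" using assms upt_conv_Cons by simp
  finally show ?thesis by simp
qed

lemma map_comp_transpose_upt:
  assumes "a < b" "b \<le> m"
  shows "map (x \<circ> Transposition.transpose a b) [a..<m+1]
    = x b # map x [a+1..<b] @ [x a] @ map x [b+1..<m+1]"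
proof -
  have "map (x \<circ> Transposition.transpose a b) [a+1..<b] = map x [a+1..<b]"
    by (rule map_cong) auto
  moreover have "map (x \<circ> Transposition.transpose a b) [b+1..<m+1] = map x [b+1..<m+1]"
    by (rule map_cong) (use assms in auto)
  ultimately show ?thesis unfolding upt_split3[OF assms] by simp
qed

lemma upt_1_eq_Cons:
  assumes "1 \<le> n"
  shows "[1..<n+1] = 1 # [2..<n+1]"
  using upt_conv_Cons[of 1 "n+1"] assms by (simp del: upt_Suc add: numeral_2_eq_2)

lemma stp_swap_swap_profile_index:
  fixes V :: "real mat"
  assumes k: "0 < k" and i: "i \<in> {2..n}" and V: "V \<in> carrier_mat 1 (k ^ n)"
    and x: "x \<in> profiles n k"
  shows "stp (stp V (swap_mat (k ^ (i - 2)) k)) (swap_mat k (k ^ (i - 1))) $$ (0, profile_index n k x)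
    = V $$ (0, profile_index n k (x \<circ> Transposition.transpose 1 i))"
proof -
  define ys where "ys = map x [2..<i]"
  define zs where "zs = map x [i+1..<n+1]"
  have e: "i - 2 + (n - i) + 2 = n" "i - 2 + 1 = i - 1" and i1: "1 < i" "i \<le> n"
    using i by auto
  have V': "V \<in> carrier_mat 1 (k ^ (i - 2 + (n - i) + 2))" using V unfolding e .
  have l1: "map x [1..<n+1] = x 1 # ys @ [x i] @ zs"
    unfolding ys_def zs_def upt_split3[OF i1, unfolded one_add_one] by (simp only: list.map map_append)
  have l2: "map (x \<circ> Transposition.transpose 1 i) [1..<n+1] = x i # ys @ [x 1] @ zs"
    unfolding ys_def zs_def by (rule map_comp_transpose_upt[OF i1, unfolded one_add_one])
  have "length ys = i - 2" "length zs = n - i"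
    by (simp_all add: ys_def zs_def del: upt_Suc)
  moreover have "set (x 1 # ys @ [x i] @ zs) \<subseteq> {1..k}"
    using set_map_profile[OF x] unfolding l1 .
  ultimately show ?thesis
    unfolding profile_index_def l1 l2 using stp_swap_swap(2)[OF k V'] unfolding e(2) by blast
qed

lemma neg_stp_swap_swap_eq_iff:
  fixes V W :: "real mat"
  assumes k: "0 < k" and i: "i \<in> {2..n}"
    and V: "V \<in> carrier_mat 1 (k ^ n)" and W: "W \<in> carrier_mat 1 (k ^ n)"
  shows "W = - stp (stp V (swap_mat (k ^ (i - 2)) k)) (swap_mat k (k ^ (i - 1))) \<longleftrightarrow>
    (\<forall>x\<in>profiles n k. W $$ (0, profile_index n k x)
       = - V $$ (0, profile_index n k (x \<circ> Transposition.transpose 1 i)))"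
proof -
  let ?M = "stp (stp V (swap_mat (k ^ (i - 2)) k)) (swap_mat k (k ^ (i - 1)))"
  have e: "i - 2 + (n - i) + 2 = n" "i - 2 + 1 = i - 1" using i by auto
  have "V \<in> carrier_mat 1 (k ^ (i - 2 + (n - i) + 2))" using V unfolding e .
  from stp_swap_swap(1)[OF k this] have M: "?M \<in> carrier_mat 1 (k ^ n)"
    unfolding e .
  show ?thesis
    using row_eq_iff_profile_index[OF W, of "- ?M"] M profile_index_less
      stp_swap_swap_profile_index[OF k i V] by simp
qed

lemma profile_tail_surj:
  assumes "j < k ^ (n - 1)" "s \<in> {1..k}" "1 \<le> n"
  obtains x where "x \<in> profiles n k" "x 1 = s" "lex_index k (map x [2..<n+1]) = j"
proof -
  obtain xs where xs: "length xs = n - 1" "set xs \<subseteq> {1..k}" "lex_index k xs = j"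
    using lex_index_surj[OF assms(1)] .
  then obtain x where "x \<in> profiles n k" "map x [1..<n+1] = s # xs"
    using profile_of_list[of "s # xs" n k] assms by auto
  then show ?thesis using that xs upt_1_eq_Cons[OF assms(3)] by simp
qed

lemma profile_tail_less:
  assumes "x \<in> profiles n k" "1 \<le> n"
  shows "lex_index k (map x [2..<n+1]) < k ^ (n - 1)"
proof -
  have "set (map x [2..<n+1]) \<subseteq> {1..k}"
    using set_map_profile[OF assms(1)] unfolding upt_1_eq_Cons[OF assms(2)] by (simp del: upt_Suc)
  from lex_index_less[OF this] show ?thesis by (simp del: upt_Suc)
qed

lemma row_eq_0_iff_profile_tails:
  fixes R :: "real mat"
  assumes R: "R \<in> carrier_mat 1 (k ^ (n - 1))" and s: "s \<in> {1..k}" and n: "1 \<le> n"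
  shows "R = 0\<^sub>m 1 (k ^ (n - 1)) \<longleftrightarrow>
    (\<forall>x\<in>profiles n k. x 1 = s \<longrightarrow> R $$ (0, lex_index k (map x [2..<n+1])) = 0)"
proof (intro iffI ballI impI)
  fix x assume "R = 0\<^sub>m 1 (k ^ (n - 1))" "x \<in> profiles n k"
  then show "R $$ (0, lex_index k (map x [2..<n+1])) = 0"
    using profile_tail_less[OF _ n] by simp
next
  assume zero: "\<forall>x\<in>profiles n k. x 1 = s \<longrightarrow> R $$ (0, lex_index k (map x [2..<n+1])) = 0"
  show "R = 0\<^sub>m 1 (k ^ (n - 1))"
  proof (rule eq_matI)
    fix r j assume "r < dim_row (0\<^sub>m 1 (k ^ (n - 1)) :: real mat)"
      "j < dim_col (0\<^sub>m 1 (k ^ (n - 1)) :: real mat)"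
    then have "r = 0" "j < k ^ (n - 1)" by auto
    moreover obtain x where "x \<in> profiles n k" "x 1 = s" "lex_index k (map x [2..<n+1]) = j"
      using profile_tail_surj[OF \<open>j < k ^ (n - 1)\<close> s n] .
    ultimately show "R $$ (r, j) = (0\<^sub>m 1 (k ^ (n - 1)) :: real mat) $$ (r, j)"
      using zero by auto
  qed (use R in auto)
qed

lemma stp_delta_one_plus_swap_profile_tail:
  fixes V :: "real mat"
  assumes k: "0 < k" and i: "i \<in> {3..n}" and V: "V \<in> carrier_mat 1 (k ^ n)"
    and x: "x \<in> profiles n k"
  shows "stp (stp V (delta k (x 1)))
      (1\<^sub>m (k ^ (n - 1)) +
       kron (stp (swap_mat (k ^ (i - 2)) k) (swap_mat k (k ^ (i - 3)))) (1\<^sub>m (k ^ (n - i))))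
      $$ (0, lex_index k (map x [2..<n+1]))
    = V $$ (0, profile_index n k x) + V $$ (0, profile_index n k (x \<circ> Transposition.transpose 2 i))"
proof -
  define ys where "ys = map x [3..<i]"
  define zs where "zs = map x [i+1..<n+1]"
  have e: "i - 3 + (n - i) + 3 = n" "i - 3 + (n - i) + 2 = n - 1" "i - 3 + 1 = i - 2"
    and i2: "2 < i" "i \<le> n" and t3: "(2::nat) + 1 = 3" using i by auto
  have V': "V \<in> carrier_mat 1 (k ^ (i - 3 + (n - i) + 3))" using V unfolding e .
  have upt: "[1..<n+1] = 1 # [2..<n+1]" using i upt_1_eq_Cons by simp
  have l1: "map x [2..<n+1] = x 2 # ys @ [x i] @ zs"
    unfolding ys_def zs_def upt_split3[OF i2, unfolded t3] by (simp only: list.map map_append)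
  have l2: "map (x \<circ> Transposition.transpose 2 i) [2..<n+1] = x i # ys @ [x 2] @ zs"
    unfolding ys_def zs_def by (rule map_comp_transpose_upt[OF i2, unfolded t3])
  have x1: "(x \<circ> Transposition.transpose 2 i) 1 = x 1"
    using i by (simp add: transpose_apply_other)
  have "set (x 1 # x 2 # ys @ [x i] @ zs) \<subseteq> {1..k}"
    using set_map_profile[OF x] unfolding upt list.map l1 .
  then have s: "x 1 \<in> {1..k}" and xs: "set (x 2 # ys @ [x i] @ zs) \<subseteq> {1..k}"
    by (simp_all only: list.set(2) insert_subset)
  have lens: "length ys = i - 3" "length zs = n - i"
    by (simp_all add: ys_def zs_def del: upt_Suc)
  show ?thesis
    using stp_delta_one_plus_swap(2)[OF k V' s lens xs]
    unfolding e profile_index_def upt list.map l1 l2 x1 .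
qed

lemma stp_delta_one_plus_swap_eq_0_iff:
  fixes V :: "real mat"
  assumes k: "0 < k" and i: "i \<in> {3..n}" and V: "V \<in> carrier_mat 1 (k ^ n)"
  shows "(\<forall>s\<in>{1..k}. stp (stp V (delta k s))
      (1\<^sub>m (k ^ (n - 1)) +
       kron (stp (swap_mat (k ^ (i - 2)) k) (swap_mat k (k ^ (i - 3)))) (1\<^sub>m (k ^ (n - i))))
      = 0\<^sub>m 1 (k ^ (n - 1))) \<longleftrightarrow>
    (\<forall>x\<in>profiles n k. V $$ (0, profile_index n k x)
       + V $$ (0, profile_index n k (x \<circ> Transposition.transpose 2 i)) = 0)"
proof -
  define M where "M s = stp (stp V (delta k s))
      (1\<^sub>m (k ^ (n - 1)) +
       kron (stp (swap_mat (k ^ (i - 2)) k) (swap_mat k (k ^ (i - 3)))) (1\<^sub>m (k ^ (n - i))))" for s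
  have e: "i - 3 + (n - i) + 3 = n" "i - 3 + (n - i) + 2 = n - 1" "i - 3 + 1 = i - 2" using i by auto
  have V': "V \<in> carrier_mat 1 (k ^ (i - 3 + (n - i) + 3))" using V unfolding e .
  have "M s = 0\<^sub>m 1 (k ^ (n - 1)) \<longleftrightarrow> (\<forall>x\<in>profiles n k. x 1 = s \<longrightarrow>
      V $$ (0, profile_index n k x) + V $$ (0, profile_index n k (x \<circ> Transposition.transpose 2 i)) = 0)"
    if s: "s \<in> {1..k}" for s
  proof -
    have "M s \<in> carrier_mat 1 (k ^ (n - 1))"
      using stp_delta_one_plus_swap(1)[OF k V' s] unfolding M_def e .
    moreover have "1 \<le> n" using i by simp
    ultimately have "M s = 0\<^sub>m 1 (k ^ (n - 1)) \<longleftrightarrow>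
        (\<forall>x\<in>profiles n k. x 1 = s \<longrightarrow> M s $$ (0, lex_index k (map x [2..<n+1])) = 0)"
      by (rule row_eq_0_iff_profile_tails[OF _ s])
    also have "\<dots> \<longleftrightarrow> (\<forall>x\<in>profiles n k. x 1 = s \<longrightarrow>
        V $$ (0, profile_index n k x) + V $$ (0, profile_index n k (x \<circ> Transposition.transpose 2 i)) = 0)"
    proof (intro ball_cong refl imp_cong)
      fix x assume "x \<in> profiles n k" "x 1 = s"
      then show "M s $$ (0, lex_index k (map x [2..<n+1])) = 0 \<longleftrightarrow>
          V $$ (0, profile_index n k x) + V $$ (0, profile_index n k (x \<circ> Transposition.transpose 2 i)) = 0"
        using stp_delta_one_plus_swap_profile_tail[OF k i V, of x] unfolding M_def by simp
    qed
    finally show ?thesis .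
  qed
  moreover have "x 1 \<in> {1..k}" if "x \<in> profiles n k" for x
    using that i by (auto simp: profiles_def PiE_iff)
  ultimately show ?thesis
    unfolding M_def[symmetric] by blast
qed

lemma skew_symmetric_transpose_1:
  assumes skew: "skew_symmetric n k c" and i: "i \<in> {2..n}" and x: "x \<in> profiles n k"
  shows "c i x = - c 1 (x \<circ> Transposition.transpose 1 i)"
proof -
  let ?t = "Transposition.transpose 1 i"
  have t: "?t permutes {1..n}" using i by (intro permutes_swap_id) auto
  have "c 1 (x \<circ> ?t) = of_int (sign ?t) * c (?t 1) ((x \<circ> ?t) \<circ> inv_into UNIV ?t)"
    using skew t profiles_comp_permutes[OF x t] i unfolding skew_symmetric_def by auto
  also have "\<dots> = - c i x"
    using i by (simp add: sign_swap_id o_assoc[symmetric])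
  finally show ?thesis by simp
qed

lemma skew_symmetric_transpose_2:
  assumes skew: "skew_symmetric n k c" and i: "i \<in> {3..n}" and x: "x \<in> profiles n k"
  shows "c 1 x + c 1 (x \<circ> Transposition.transpose 2 i) = 0"
proof -
  let ?t = "Transposition.transpose 2 i"
  have t: "?t permutes {1..n}" using i by (intro permutes_swap_id) auto
  have "c 1 x = of_int (sign ?t) * c (?t 1) (x \<circ> inv_into UNIV ?t)"
    using skew t x i unfolding skew_symmetric_def by auto
  also have "\<dots> = - c 1 (x \<circ> ?t)"
    using i by (simp add: sign_swap_id)
  finally show ?thesis by simp
qed

lemma sign_change_transpose_if_sign_change_transpose_2:
  fixes f :: "(nat \<Rightarrow> nat) \<Rightarrow> real"
  assumes f: "\<And>j z. j \<in> {3..n} \<Longrightarrow> z \<in> profiles n k \<Longrightarrow> f (z \<circ> Transposition.transpose 2 j) = - f z"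
    and ab: "a \<in> {2..n}" "b \<in> {2..n}" "a \<noteq> b" and x: "x \<in> profiles n k"
  shows "f (x \<circ> Transposition.transpose a b) = - f x"
proof -
  let ?T = "Transposition.transpose"
  consider "a = 2" | "b = 2" | "a \<noteq> 2" "b \<noteq> 2" by blast
  then show ?thesis
  proof cases
    case 1
    then show ?thesis using ab x f by auto
  next
    case 2
    then show ?thesis using ab x f by (auto simp: transpose_commute)
  next
    case 3
    then have a: "a \<in> {3..n}" and b: "b \<in> {3..n}" using ab by auto
    have T2: "?T 2 j permutes {1..n}" if "j \<in> {3..n}" for j
      using that by (intro permutes_swap_id) auto
    have x1: "x \<circ> ?T 2 a \<in> profiles n k"
      by (rule profiles_comp_permutes[OF x T2[OF a]])
    have x2: "x \<circ> ?T 2 a \<circ> ?T 2 b \<in> profiles n k"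
      by (rule profiles_comp_permutes[OF x1 T2[OF b]])
    have "?T a b = ?T 2 a \<circ> ?T 2 b \<circ> ?T 2 a"
      using 3 ab by (auto simp: fun_eq_iff transpose_def)
    then have "f (x \<circ> ?T a b) = f ((x \<circ> ?T 2 a \<circ> ?T 2 b) \<circ> ?T 2 a)"
      by (simp add: o_assoc)
    also have "\<dots> = - f (x \<circ> ?T 2 a \<circ> ?T 2 b)" by (rule f[OF a x2])
    also have "\<dots> = f (x \<circ> ?T 2 a)" using f[OF b x1] by simp
    also have "\<dots> = - f x" by (rule f[OF a x])
    finally show ?thesis .
  qed
qed

lemma alternating_if_sign_change_transpose:
  fixes f :: "(nat \<Rightarrow> nat) \<Rightarrow> real"
  assumes S: "S \<subseteq> {1..n}"
    and f: "\<And>a b x. a \<in> S \<Longrightarrow> b \<in> S \<Longrightarrow> a \<noteq> b \<Longrightarrow> x \<in> profiles n k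
      \<Longrightarrow> f (x \<circ> Transposition.transpose a b) = - f x"
    and p: "p permutes S"
  shows "x \<in> profiles n k \<Longrightarrow> f (x \<circ> p) = of_int (sign p) * f x"
  using p finite_subset[OF S finite_atLeastAtMost]
proof (induction arbitrary: x rule: permutes_induct)
  case id
  then show ?case by simp
next
  case (swap a b p)
  let ?t = "Transposition.transpose a b"
  have t: "?t permutes {1..n}" using swap S by (intro permutes_swap_id) auto
  have "f (x \<circ> (?t \<circ> p)) = f ((x \<circ> ?t) \<circ> p)" by (simp add: o_assoc)
  also have "\<dots> = of_int (sign p) * f (x \<circ> ?t)"
    using swap.IH profiles_comp_permutes[OF swap.prems t] .
  also have "\<dots> = of_int (sign (?t \<circ> p)) * f x"
  proof -
    have "permutation p" using swap S permutes_imp_permutation finite_subset by blast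
    then have "sign (?t \<circ> p) = - sign p"
      using swap(3) by (simp add: sign_compose permutation_swap_id sign_swap_id)
    then show ?thesis using f[OF swap(1,2,3) swap.prems] by simp
  qed
  finally show ?case .
qed

lemma skew_symmetric_if_transpositions:
  assumes first: "\<And>i x. i \<in> {2..n} \<Longrightarrow> x \<in> profiles n k
      \<Longrightarrow> c i x = - c 1 (x \<circ> Transposition.transpose 1 i)"
    and alt: "\<And>p x. p permutes {2..n} \<Longrightarrow> x \<in> profiles n k
      \<Longrightarrow> c 1 (x \<circ> p) = of_int (sign p) * c 1 x"
  shows "skew_symmetric n k c"
  unfolding skew_symmetric_def
proof (intro allI impI ballI)
  fix \<sigma> i x assume \<sigma>: "\<sigma> permutes {1..n}" and i: "i \<in> {1..n}" and x: "x \<in> profiles n k"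
  let ?T = "Transposition.transpose (1::nat)"
  have first': "c j y = of_int (sign (?T j)) * c 1 (y \<circ> ?T j)"
    if "j \<in> {1..n}" "y \<in> profiles n k" for j y
    using first[of j y] that by (cases "j = 1") (auto simp: sign_swap_id)
  have si: "\<sigma> i \<in> {1..n}" using permutes_in_image[OF \<sigma>] i by simp
  have ti: "?T i permutes {1..n}" and tj: "?T (\<sigma> i) permutes {1..n}"
    using i si by (auto intro!: permutes_swap_id)
  have \<sigma>': "inv_into UNIV \<sigma> permutes {1..n}" by (rule permutes_inv[OF \<sigma>])
  define \<rho> where "\<rho> = ?T i \<circ> inv_into UNIV \<sigma> \<circ> ?T (\<sigma> i)"
  have "\<rho> permutes {1..n}" unfolding \<rho>_def by (intro permutes_compose ti tj \<sigma>')
  moreover have "\<rho> 1 = 1" unfolding \<rho>_def using permutes_inverses(2)[OF \<sigma>] by simp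
  ultimately have "\<rho> permutes {1..n} - {1}" unfolding permutes_def by auto
  moreover have "{1..n} - {1} = {2..n}" by auto
  ultimately have \<rho>: "\<rho> permutes {2..n}" by simp
  have "permutation (?T i)" "permutation (?T (\<sigma> i))" "permutation (inv_into UNIV \<sigma>)" "permutation \<sigma>"
    using ti tj \<sigma>' \<sigma> permutes_imp_permutation[OF finite_atLeastAtMost] by blast+
  then have sign_\<rho>: "sign \<rho> = sign (?T i) * sign \<sigma> * sign (?T (\<sigma> i))"
    unfolding \<rho>_def by (simp add: sign_compose permutation_compose sign_inverse)
  have "x \<circ> inv_into UNIV \<sigma> \<circ> ?T (\<sigma> i) = (x \<circ> ?T i) \<circ> \<rho>"
    unfolding \<rho>_def by (simp add: fun_eq_iff)
  then have "of_int (sign \<sigma>) * c (\<sigma> i) (x \<circ> inv_into UNIV \<sigma>)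
      = of_int (sign \<sigma>) * (of_int (sign (?T (\<sigma> i))) * (of_int (sign \<rho>) * c 1 (x \<circ> ?T i)))"
    using first'[OF si profiles_comp_permutes[OF x \<sigma>']] alt[OF \<rho> profiles_comp_permutes[OF x ti]]
    by simp
  also have "\<dots> = of_int (sign \<sigma> * sign \<sigma> * (sign (?T (\<sigma> i)) * sign (?T (\<sigma> i))) * sign (?T i))
      * c 1 (x \<circ> ?T i)"
    unfolding sign_\<rho> by (simp only: of_int_mult mult_ac)
  also have "\<dots> = c i x"
    using first'[OF i x] by simp
  finally show "c i x = of_int (sign \<sigma>) * c (\<sigma> i) (x \<circ> inv_into UNIV \<sigma>)" by simp
qed

lemma skew_symmetric_iff_transpositions:
  "skew_symmetric n k c \<longleftrightarrow>
    (\<forall>i\<in>{2..n}. \<forall>x\<in>profiles n k. c i x = - c 1 (x \<circ> Transposition.transpose 1 i)) \<and>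
    (\<forall>i\<in>{3..n}. \<forall>x\<in>profiles n k. c 1 x + c 1 (x \<circ> Transposition.transpose 2 i) = 0)"
  (is "_ \<longleftrightarrow> ?A \<and> ?B")
proof
  assume "skew_symmetric n k c"
  then show "?A \<and> ?B"
    using skew_symmetric_transpose_1 skew_symmetric_transpose_2 by blast
next
  assume AB: "?A \<and> ?B"
  have "c 1 (x \<circ> Transposition.transpose a b) = - c 1 x"
    if "a \<in> {2..n}" "b \<in> {2..n}" "a \<noteq> b" "x \<in> profiles n k" for a b x
  proof (rule sign_change_transpose_if_sign_change_transpose_2[OF _ that])
    fix j z assume "j \<in> {3..n}" "z \<in> profiles n k"
    then show "c 1 (z \<circ> Transposition.transpose 2 j) = - c 1 z"
      using AB by (simp add: eq_neg_iff_add_eq_0 add.commute)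
  qed
  then have "c 1 (x \<circ> p) = of_int (sign p) * c 1 x"
    if "p permutes {2..n}" "x \<in> profiles n k" for p x
    using alternating_if_sign_change_transpose[of "{2..n}" n k "c 1", OF _ _ that(1) that(2)] by auto
  then show "skew_symmetric n k c"
    using AB by (intro skew_symmetric_if_transpositions) auto
qed

theorem theorem3p10:
  fixes n \<kappa> :: nat
    and c :: "nat \<Rightarrow> (nat \<Rightarrow> nat) \<Rightarrow> real"
    and V :: "nat \<Rightarrow> real mat"
  assumes n2: "n \<ge> 2" and k1: "\<kappa> \<ge> 1"
    and Vdim: "\<forall>i\<in>{1..n}. V i \<in> carrier_mat 1 (\<kappa> ^ n)"
    and Vrep: "\<forall>i\<in>{1..n}. \<forall>x\<in>profiles n \<kappa>. c i x = stp_profile n \<kappa> (V i) x $$ (0, 0)"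
  defines "condA \<equiv> (\<forall>i\<in>{2..n}.
             V i = - stp (stp (V 1) (swap_mat (\<kappa> ^ (i - 2)) \<kappa>)) (swap_mat \<kappa> (\<kappa> ^ (i - 1))))"
    and "condB \<equiv> (\<forall>s\<in>{1..\<kappa>}. \<forall>i\<in>{3..n}.
             stp (stp (V 1) (delta \<kappa> s))
               (1\<^sub>m (\<kappa> ^ (n - 1)) +
                kron (stp (swap_mat (\<kappa> ^ (i - 2)) \<kappa>) (swap_mat \<kappa> (\<kappa> ^ (i - 3))))
                     (1\<^sub>m (\<kappa> ^ (n - i))))
             = 0\<^sub>m 1 (\<kappa> ^ (n - 1)))"
  shows "(n = 2 \<longrightarrow> (skew_symmetric n \<kappa> c \<longleftrightarrow> condA))
       \<and> (n > 2 \<longrightarrow> (skew_symmetric n \<kappa> c \<longleftrightarrow> condA \<and> condB))"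
proof -
  let ?T = "Transposition.transpose"
  have k: "0 < \<kappa>" using k1 by simp
  have V1: "V 1 \<in> carrier_mat 1 (\<kappa> ^ n)" using Vdim n2 by auto
  have c_eq: "c i x = V i $$ (0, profile_index n \<kappa> x)" if "i \<in> {1..n}" "x \<in> profiles n \<kappa>" for i x
    using Vrep Vdim that stp_profile_eq_index[OF k] by auto
  have comp_T: "x \<circ> ?T a b \<in> profiles n \<kappa>" if "x \<in> profiles n \<kappa>" "a \<in> {1..n}" "b \<in> {1..n}" for x a b
    using that by (intro profiles_comp_permutes permutes_swap_id) auto
  have "condA \<longleftrightarrow> (\<forall>i\<in>{2..n}. \<forall>x\<in>profiles n \<kappa>.
      V i $$ (0, profile_index n \<kappa> x) = - V 1 $$ (0, profile_index n \<kappa> (x \<circ> ?T 1 i)))"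
    unfolding condA_def using neg_stp_swap_swap_eq_iff[OF k _ V1] Vdim by auto
  also have "\<dots> \<longleftrightarrow> (\<forall>i\<in>{2..n}. \<forall>x\<in>profiles n \<kappa>. c i x = - c 1 (x \<circ> ?T 1 i))"
    using c_eq comp_T by (intro ball_cong refl) auto
  finally have A: "condA \<longleftrightarrow> (\<forall>i\<in>{2..n}. \<forall>x\<in>profiles n \<kappa>. c i x = - c 1 (x \<circ> ?T 1 i))" .
  have "condB \<longleftrightarrow> (\<forall>i\<in>{3..n}. \<forall>x\<in>profiles n \<kappa>.
      V 1 $$ (0, profile_index n \<kappa> x) + V 1 $$ (0, profile_index n \<kappa> (x \<circ> ?T 2 i)) = 0)"
    unfolding condB_def using stp_delta_one_plus_swap_eq_0_iff[OF k _ V1] by blast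
  also have "\<dots> \<longleftrightarrow> (\<forall>i\<in>{3..n}. \<forall>x\<in>profiles n \<kappa>. c 1 x + c 1 (x \<circ> ?T 2 i) = 0)"
    using c_eq comp_T n2 by (intro ball_cong refl) auto
  finally have B: "condB \<longleftrightarrow> (\<forall>i\<in>{3..n}. \<forall>x\<in>profiles n \<kappa>. c 1 x + c 1 (x \<circ> ?T 2 i) = 0)" .
  have "n = 2 \<Longrightarrow> condB" unfolding condB_def by auto
  then show ?thesis
    unfolding skew_symmetric_iff_transpositions A B by auto
qed

end
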